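(* Let $C>0$, take $n\sim CM\log M$ (as $M\to\infty$), and draw the entries of an $M\times n$ matrix $\Phi=\{\varphi_i\}_{i=1}^n$ independently from $\mathbb{C}\mathcal{N}(0,\frac1M)$. Then for each proportion $\alpha<1-\frac{1}{2C}$ there exists a constant $C'>0$ such that \[ \mathrm{PU}(\Phi;\alpha)\geq\frac{C'}{M} \] with overwhelming probability.
   Context: $\mathbb{C}\mathcal{N}(0,\sigma^2)$ is the complex Gaussian with independent $\mathcal{N}(0,\sigma^2/2)$ real and imaginary parts. "With overwhelming probability" means with probability at least $1-c_0\mathrm{e}^{-c_1M}$ for constants $c_0,c_1>0$ independent of $M$. The $\alpha$-projective uniformity of $\Phi=\{\varphi_i\}_{i=1}^n\subseteq\mathbb{C}^M$ is \[ \mathrm{PU}(\Phi;\alpha)=\min_{x\in\mathbb{C}^M,\ \|x\|=1}\ \max_{\mathcal{I}\subseteq\{1,\dots,n\},\ |\mathcal{I}|\geq\alpha n}\ \min_{i\in\mathcal{I}}|\langle x,\varphi_i\rangle|^2 . \] *)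

theory Defs
  imports "HOL-Probability.Probability" "HOL-Library.Landau_Symbols"
begin

text \<open>Complex Gaussian CN(0, s2): real and imaginary parts independent N(0, s2/2).
  normal_density mu sigma uses the standard deviation sigma.\<close>
definition cgauss :: "real \<Rightarrow> complex measure" where
  "cgauss s2 =
     distr (density lborel (normal_density 0 (sqrt (s2 / 2)))
              \<Otimes>\<^sub>M density lborel (normal_density 0 (sqrt (s2 / 2))))
           borel (\<lambda>(a, b). Complex a b)"

text \<open>A matrix is a function Phi on index pairs (j, i), j < M the coordinate (row),
  i < n the column; the column vector phi_i is (\<lambda>j. Phi (j, i)).\<close>
definition gauss_matrix :: "nat \<Rightarrow> nat \<Rightarrow> (nat \<times> nat \<Rightarrow> complex) measure" where
  "gauss_matrix M n = PiM ({..<M} \<times> {..<n}) (\<lambda>_. cgauss (1 / real M))"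

definition cinner :: "nat \<Rightarrow> (nat \<Rightarrow> complex) \<Rightarrow> (nat \<Rightarrow> complex) \<Rightarrow> complex" where
  "cinner M x y = (\<Sum>j<M. x j * cnj (y j))"

definition unit_vecs :: "nat \<Rightarrow> (nat \<Rightarrow> complex) set" where
  "unit_vecs M = {x. (\<Sum>j<M. (cmod (x j))\<^sup>2) = 1}"

definition PU :: "nat \<Rightarrow> nat \<Rightarrow> (nat \<times> nat \<Rightarrow> complex) \<Rightarrow> real \<Rightarrow> real" where
  "PU M n Phi \<alpha> =
     Inf ((\<lambda>x. Sup ((\<lambda>I. Min ((\<lambda>i. (cmod (cinner M x (\<lambda>j. Phi (j, i))))\<^sup>2) ` I))
                     ` {I. I \<subseteq> {..<n} \<and> real (card I) \<ge> \<alpha> * real n}))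
          ` unit_vecs M)"

end

theory Submission
  imports Defs "HOL-Real_Asymp.Real_Asymp"
begin

(* Let c = C'/M.  If PU < c, some unit x has |<x, phi_i>|^2 < c for more than (1 - alpha) n
   columns.  Unless some entry has a real or imaginary part exceeding 1 (probability
   O(M n exp (-M/2))), the point y nearest to x on a coordinate grid of mesh sqrt c / (2M)
   then has |Re <y, phi_i>| < 2 sqrt c for the same columns.  For fixed y the Re <y, phi_i>
   are independent N(0, |y|^2 / (2M)), so this has probability at most 2^n (4 sqrt C')^((1-alpha) n).
   The grid has exp (O (M log M)) points and n ~ C M log M, so for small C' the union bound
   over the grid is exp (-Omega (M log M)), and the total failure probability is exp (-Omega M). *)

section \<open>Gaussian tail bounds and counting\<close>

lemma normal_density_le_inverse:
  assumes "0 < s"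
  shows "normal_density 0 s x \<le> 1 / (2 * s)"
proof -
  have "2 * s \<le> sqrt (2 * pi * s\<^sup>2)"
    using pi_gt3 assms by (intro real_le_rsqrt) (simp add: power2_eq_square)
  moreover have "normal_density 0 s x \<le> 1 / sqrt (2 * pi * s\<^sup>2)"
    unfolding normal_density_def by (intro mult_left_le) auto
  ultimately show ?thesis
    using assms by (smt (verit, best) frac_le)
qed

lemma normal_density_le_tail:
  assumes s: "0 < s" and a: "0 \<le> a" "a < \<bar>x\<bar>"
  shows "normal_density 0 s x \<le> sqrt 2 * exp (- (a\<^sup>2 / (4 * s\<^sup>2))) * normal_density 0 (sqrt 2 * s) x"
proof -
  have "a\<^sup>2 \<le> x\<^sup>2"
    using a by (metis abs_le_square_iff abs_of_nonneg less_imp_le)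
  then have "- x\<^sup>2 / (2 * s\<^sup>2) \<le> - (a\<^sup>2 / (4 * s\<^sup>2)) + - x\<^sup>2 / (2 * (sqrt 2 * s)\<^sup>2)"
    using s by (simp add: power_mult_distrib field_simps)
  then have "normal_density 0 s x
      \<le> 1 / sqrt (2 * pi * s\<^sup>2) * exp (- (a\<^sup>2 / (4 * s\<^sup>2)) + - x\<^sup>2 / (2 * (sqrt 2 * s)\<^sup>2))"
    unfolding normal_density_def using s by (intro mult_left_mono) auto
  also have "sqrt (2 * pi * (sqrt 2 * s)\<^sup>2) = sqrt 2 * sqrt (2 * pi * s\<^sup>2)"
    by (simp add: power_mult_distrib real_sqrt_mult[symmetric] algebra_simps)
  then have "1 / sqrt (2 * pi * s\<^sup>2) * exp (- (a\<^sup>2 / (4 * s\<^sup>2)) + - x\<^sup>2 / (2 * (sqrt 2 * s)\<^sup>2))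
      = sqrt 2 * exp (- (a\<^sup>2 / (4 * s\<^sup>2))) * normal_density 0 (sqrt 2 * s) x"
    unfolding normal_density_def exp_add by (simp add: field_simps)
  finally show ?thesis .
qed

context prob_space
begin

lemma prob_abs_less_normal:
  assumes "distributed M lborel Y (normal_density 0 s)" and "0 < s" and "0 \<le> r"
  shows "prob {\<omega>\<in>space M. \<bar>Y \<omega>\<bar> < r} \<le> r / s"
proof -
  have "{\<omega>\<in>space M. \<bar>Y \<omega>\<bar> < r} = Y -` {-r<..<r} \<inter> space M"
    by auto
  then have "emeasure M {\<omega>\<in>space M. \<bar>Y \<omega>\<bar> < r}
      = (\<integral>\<^sup>+x. ennreal (normal_density 0 s x) * indicator {-r<..<r} x \<partial>lborel)"
    using distributed_emeasure[OF assms(1), of "{-r<..<r}"] by simp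
  also have "\<dots> \<le> (\<integral>\<^sup>+x. ennreal (1 / (2 * s)) * indicator {-r<..<r} x \<partial>lborel)"
    using normal_density_le_inverse[OF assms(2)]
    by (intro nn_integral_mono) (auto split: split_indicator intro!: ennreal_leI)
  also have "\<dots> = ennreal (r / s)"
    using assms(2,3) by (simp add: nn_integral_cmult_indicator ennreal_mult''[symmetric])
  finally show ?thesis
    using assms(2,3) by (simp add: emeasure_eq_measure)
qed

lemma prob_abs_greater_normal:
  assumes "distributed M lborel Y (normal_density 0 s)" and s: "0 < s" and a: "0 \<le> a"
  shows "prob {\<omega>\<in>space M. a < \<bar>Y \<omega>\<bar>} \<le> sqrt 2 * exp (- (a\<^sup>2 / (4 * s\<^sup>2)))"
proof -
  let ?c = "sqrt 2 * exp (- (a\<^sup>2 / (4 * s\<^sup>2)))"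
  have s': "0 < sqrt 2 * s"
    using s by simp
  have "emeasure M {\<omega>\<in>space M. a < \<bar>Y \<omega>\<bar>}
      = (\<integral>\<^sup>+x. ennreal (normal_density 0 s x) * indicator {x. a < \<bar>x\<bar>} x \<partial>lborel)"
    using distributed_emeasure[OF assms(1), of "{x. a < \<bar>x\<bar>}"] by (simp add: vimage_def Int_def conj_commute)
  also have "\<dots> \<le> (\<integral>\<^sup>+x. ennreal ?c * ennreal (normal_density 0 (sqrt 2 * s) x) \<partial>lborel)"
    using normal_density_le_tail[OF s a]
    by (intro nn_integral_mono)
       (auto split: split_indicator simp: ennreal_mult''[symmetric] intro!: ennreal_leI)
  also have "\<dots> = ennreal ?c"
    using s' by (simp add: nn_integral_cmult nn_integral_eq_integral integrable_normal_density
        integral_normal_density)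
  finally show ?thesis
    by (simp add: emeasure_eq_measure)
qed

lemma prob_card_ge_le:
  assumes I: "finite I" and A: "\<And>i. i \<in> I \<Longrightarrow> A i \<in> events" and m: "0 < m"
    and p: "0 \<le> p"
    and inter: "\<And>S. S \<subseteq> I \<Longrightarrow> card S = m \<Longrightarrow> prob (\<Inter>i\<in>S. A i) \<le> p ^ m"
  shows "prob {\<omega>\<in>space M. m \<le> card {i\<in>I. \<omega> \<in> A i}} \<le> 2 ^ card I * p ^ m"
proof -
  define F where "F = {S. S \<subseteq> I \<and> card S = m}"
  have F: "finite F" "F \<subseteq> Pow I"
    using I by (auto simp: F_def)
  have events: "(\<Inter>i\<in>S. A i) \<in> events" if "S \<in> F" for S
    using that m I A by (intro sets.finite_INT) (auto simp: F_def intro: finite_subset)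
  have "{\<omega>\<in>space M. m \<le> card {i\<in>I. \<omega> \<in> A i}} \<subseteq> (\<Union>S\<in>F. \<Inter>i\<in>S. A i)"
  proof
    fix \<omega> assume "\<omega> \<in> {\<omega>\<in>space M. m \<le> card {i\<in>I. \<omega> \<in> A i}}"
    then obtain S where "S \<subseteq> {i\<in>I. \<omega> \<in> A i}" "card S = m"
      using obtain_subset_with_card_n[of m "{i\<in>I. \<omega> \<in> A i}"] by auto
    then show "\<omega> \<in> (\<Union>S\<in>F. \<Inter>i\<in>S. A i)"
      by (auto simp: F_def)
  qed
  then have "prob {\<omega>\<in>space M. m \<le> card {i\<in>I. \<omega> \<in> A i}} \<le> prob (\<Union>S\<in>F. \<Inter>i\<in>S. A i)"
    using F events by (intro finite_measure_mono) auto
  also have "\<dots> \<le> (\<Sum>S\<in>F. prob (\<Inter>i\<in>S. A i))"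
    using F events by (intro finite_measure_subadditive_finite) auto
  also have "\<dots> \<le> real (card F) * p ^ m"
    using sum_mono[of F "\<lambda>S. prob (\<Inter>i\<in>S. A i)" "\<lambda>_. p ^ m"] inter by (auto simp: F_def)
  also have "\<dots> \<le> 2 ^ card I * p ^ m"
    using card_mono[OF _ F(2)] I p by (intro mult_right_mono) (auto simp: card_Pow)
  finally show ?thesis .
qed

lemma prob_ge_one_minus_union_bound:
  assumes G: "G \<in> events" and L: "L \<in> events" and Y: "finite Y" "\<And>y. y \<in> Y \<Longrightarrow> S y \<in> events"
    and cover: "space M - G \<subseteq> L \<union> (\<Union>y\<in>Y. S y)" and S: "\<And>y. y \<in> Y \<Longrightarrow> prob (S y) \<le> b"
  shows "1 - (prob L + real (card Y) * b) \<le> prob G"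
proof -
  have "prob (space M - G) \<le> prob (L \<union> (\<Union>y\<in>Y. S y))"
    using cover L Y by (intro finite_measure_mono) auto
  also have "\<dots> \<le> prob L + prob (\<Union>y\<in>Y. S y)"
    using L Y by (intro measure_Un_le) auto
  also have "\<dots> \<le> prob L + (\<Sum>y\<in>Y. prob (S y))"
    using Y by (intro add_left_mono finite_measure_subadditive_finite) auto
  also have "\<dots> \<le> prob L + real (card Y) * b"
    using sum_mono[of Y "\<lambda>y. prob (S y)" "\<lambda>_. b"] S by simp
  finally show ?thesis
    using prob_compl[OF G] by simp
qed

end

lemma sets_card_ge:
  assumes I: "finite I" and P: "\<And>i. i \<in> I \<Longrightarrow> {\<omega>\<in>space M. P i \<omega>} \<in> sets M"
  shows "{\<omega>\<in>space M. t \<le> real (card {i\<in>I. P i \<omega>})} \<in> sets M"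
proof -
  have "{\<omega>\<in>space M. t \<le> real (card {i\<in>I. P i \<omega>})}
      = {\<omega>\<in>space M. \<exists>S\<in>{S. S \<subseteq> I \<and> t \<le> real (card S)}. \<forall>i\<in>S. P i \<omega>}"
  proof (intro set_eqI iffI)
    fix \<omega> assume "\<omega> \<in> {\<omega>\<in>space M. \<exists>S\<in>{S. S \<subseteq> I \<and> t \<le> real (card S)}. \<forall>i\<in>S. P i \<omega>}"
    then obtain S where "S \<subseteq> {i\<in>I. P i \<omega>}" "t \<le> real (card S)" "\<omega> \<in> space M"
      by auto
    with card_mono[OF _ this(1)] I show "\<omega> \<in> {\<omega>\<in>space M. t \<le> real (card {i\<in>I. P i \<omega>})}"
      by force
  next
    fix \<omega> assume "\<omega> \<in> {\<omega>\<in>space M. t \<le> real (card {i\<in>I. P i \<omega>})}"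
    then show "\<omega> \<in> {\<omega>\<in>space M. \<exists>S\<in>{S. S \<subseteq> I \<and> t \<le> real (card S)}. \<forall>i\<in>S. P i \<omega>}"
      by (intro CollectI conjI bexI[of _ "{i\<in>I. P i \<omega>}"]) auto
  qed
  also have "\<dots> \<in> sets M"
    using I P by (intro sets.sets_Collect_countable_Ex' sets.sets_Collect_countable_All')
      (auto intro: countable_finite finite_subset)
  finally show ?thesis .
qed

section \<open>The complex Gaussian matrix\<close>

definition normal_measure :: "real \<Rightarrow> real measure" where
  "normal_measure s = density lborel (normal_density 0 s)"

lemma prob_space_normal_measure: "0 < s \<Longrightarrow> prob_space (normal_measure s)"
  unfolding normal_measure_def by (rule prob_space_normal_density)

lemma sets_normal_measure [simp, measurable_cong]: "sets (normal_measure s) = sets borel"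
  by (simp add: normal_measure_def)

lemma space_normal_measure [simp]: "space (normal_measure s) = UNIV"
  by (simp add: normal_measure_def)

lemma sets_cgauss [simp, measurable_cong]: "sets (cgauss s2) = sets borel"
  by (simp add: cgauss_def)

lemma cgauss_eq_distr:
  "cgauss s2 = distr (normal_measure (sqrt (s2 / 2)) \<Otimes>\<^sub>M normal_measure (sqrt (s2 / 2))) borel
     (\<lambda>(a, b). Complex a b)"
  by (simp add: cgauss_def normal_measure_def)

lemma measurable_Complex_pair:
  "(\<lambda>(a, b). Complex a b) \<in> borel_measurable (normal_measure s \<Otimes>\<^sub>M normal_measure s)"
proof -
  have "(\<lambda>(a, b). Complex a b) = (\<lambda>p. complex_of_real (fst p) + \<i> * complex_of_real (snd p))"
    by (auto simp: Complex_eq)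
  then show ?thesis
    by (simp add: measurable_cong_sets[OF sets_pair_measure_cong[OF sets_normal_measure sets_normal_measure] refl])
qed

lemma prob_space_cgauss: "0 < s2 \<Longrightarrow> prob_space (cgauss s2)"
proof -
  assume "0 < s2"
  then interpret pair_prob_space "normal_measure (sqrt (s2 / 2))" "normal_measure (sqrt (s2 / 2))"
    by (simp add: pair_prob_space_def pair_sigma_finite_def prob_space_normal_measure
        prob_space_imp_sigma_finite)
  show ?thesis
    unfolding cgauss_eq_distr by (intro prob_space_distr measurable_Complex_pair)
qed

definition re_im :: "bool \<Rightarrow> complex \<Rightarrow> real" where
  "re_im b z = (if b then Re z else Im z)"

lemma measurable_re_im [measurable]: "re_im b \<in> borel_measurable borel"
  unfolding re_im_def by (cases b) simp_all

lemma emeasure_cgauss_re_im: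
  assumes "0 < s2" and [measurable]: "\<And>b. A b \<in> sets borel"
  shows "emeasure (cgauss s2) {z. \<forall>b. re_im b z \<in> A b}
       = emeasure (normal_measure (sqrt (s2 / 2))) (A True) * emeasure (normal_measure (sqrt (s2 / 2))) (A False)"
proof -
  let ?N = "normal_measure (sqrt (s2 / 2))"
  interpret N: prob_space ?N
    using assms(1) by (simp add: prob_space_normal_measure)
  have "{z. \<forall>b. re_im b z \<in> A b} = {z. Re z \<in> A True \<and> Im z \<in> A False}"
    by (auto simp: re_im_def)
  moreover have "{z. Re z \<in> A True \<and> Im z \<in> A False} \<in> sets borel"
    by measurable
  moreover have "(\<lambda>(a, b). Complex a b) -` {z. Re z \<in> A True \<and> Im z \<in> A False} \<inter> space (?N \<Otimes>\<^sub>M ?N)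
      = A True \<times> A False"
    by (auto simp: space_pair_measure)
  ultimately show ?thesis
    unfolding cgauss_eq_distr
    by (simp add: emeasure_distr measurable_Complex_pair N.emeasure_pair_measure_Times)
qed

lemma emeasure_cgauss_re_im_vimage:
  assumes "0 < s2" and "A \<in> sets borel"
  shows "emeasure (cgauss s2) {z. re_im b z \<in> A} = emeasure (normal_measure (sqrt (s2 / 2))) A"
proof -
  interpret N: prob_space "normal_measure (sqrt (s2 / 2))"
    using assms(1) by (simp add: prob_space_normal_measure)
  have "{z. re_im b z \<in> A} = {z. \<forall>b'. re_im b' z \<in> (if b' = b then A else UNIV)}"
    by auto
  then show ?thesis
    using emeasure_cgauss_re_im[OF assms(1), of "\<lambda>b'. if b' = b then A else UNIV"] assms(2)
    by (cases b) (simp_all add: N.emeasure_space_1[simplified])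
qed

definition entry_part :: "(nat \<times> nat) \<times> bool \<Rightarrow> (nat \<times> nat \<Rightarrow> complex) \<Rightarrow> real" where
  "entry_part t \<Phi> = re_im (snd t) (\<Phi> (fst t))"

locale gaussian_matrix =
  fixes M N :: nat
  assumes M_pos: "0 < M"
begin

sublocale prob_space "gauss_matrix M N"
  unfolding gauss_matrix_def using M_pos by (intro prob_space_PiM prob_space_cgauss) simp

sublocale entries: product_prob_space "\<lambda>_. cgauss (1 / real M)" "{..<M} \<times> {..<N}"
  by (simp add: product_prob_space_def product_prob_space_axioms_def product_sigma_finite_def
      prob_space_cgauss M_pos prob_space_imp_sigma_finite)

lemma measurable_entry [measurable]:
  "p \<in> {..<M} \<times> {..<N} \<Longrightarrow> (\<lambda>\<Phi>. \<Phi> p) \<in> borel_measurable (gauss_matrix M N)"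
  using measurable_component_singleton[of p "{..<M} \<times> {..<N}" "\<lambda>_. cgauss (1 / real M)"]
    measurable_cong_sets[OF refl sets_cgauss]
  by (auto simp: gauss_matrix_def)

lemma measurable_entry_part [measurable]:
  "fst t \<in> {..<M} \<times> {..<N} \<Longrightarrow> entry_part t \<in> borel_measurable (gauss_matrix M N)"
  unfolding entry_part_def by measurable

lemma emeasure_entry_part:
  assumes "fst t \<in> {..<M} \<times> {..<N}" and "A \<in> sets borel"
  shows "emeasure (gauss_matrix M N) (entry_part t -` A \<inter> space (gauss_matrix M N))
    = emeasure (normal_measure (sqrt (1 / real M / 2))) A"
proof -
  have "entry_part t -` A \<inter> space (gauss_matrix M N)
      = {\<Phi> \<in> space (PiM ({..<M} \<times> {..<N}) (\<lambda>_. cgauss (1 / real M))). \<Phi> (fst t) \<in> {z. re_im (snd t) z \<in> A}}"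
    by (auto simp: entry_part_def gauss_matrix_def)
  also have "emeasure (gauss_matrix M N) \<dots> = emeasure (cgauss (1 / real M)) {z. re_im (snd t) z \<in> A}"
    unfolding gauss_matrix_def using assms by (intro entries.emeasure_PiM_Collect_single) auto
  finally show ?thesis
    using emeasure_cgauss_re_im_vimage[OF _ assms(2)] M_pos by simp
qed

lemma distributed_entry_part:
  assumes "fst t \<in> {..<M} \<times> {..<N}"
  shows "distributed (gauss_matrix M N) lborel (entry_part t) (normal_density 0 (sqrt (1 / real M / 2)))"
proof -
  have "distr (gauss_matrix M N) lborel (entry_part t) = normal_measure (sqrt (1 / real M / 2))"
    using assms by (intro measure_eqI) (simp_all add: emeasure_distr emeasure_entry_part)
  then show ?thesis
    using assms by (simp add: distributed_def normal_measure_def)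
qed

lemma indep_vars_entry_part:
  assumes "0 < N"
  shows "indep_vars (\<lambda>_. borel) entry_part (({..<M} \<times> {..<N}) \<times> UNIV)"
proof -
  let ?I = "{..<M} \<times> {..<N}" and ?T = "({..<M} \<times> {..<N}) \<times> (UNIV :: bool set)"
  let ?G = "normal_measure (sqrt (1 / real M / 2))"
  have T: "?T \<noteq> {}" "finite ?T"
    using M_pos assms by auto
  have "emeasure (gauss_matrix M N) (\<Inter>t\<in>?T. entry_part t -` A t \<inter> space (gauss_matrix M N))
      = (\<Prod>t\<in>?T. emeasure (gauss_matrix M N) (entry_part t -` A t \<inter> space (gauss_matrix M N)))"
    if A: "A \<in> (\<Pi> t\<in>?T. sets borel)" for A
  proof -
    have A': "A (p, b) \<in> sets borel" if "p \<in> ?I" for p b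
      using A that by auto
    have "(\<Inter>t\<in>?T. entry_part t -` A t \<inter> space (gauss_matrix M N))
        = {\<Phi> \<in> space (PiM ?I (\<lambda>_. cgauss (1 / real M))). \<forall>p\<in>?I. \<Phi> p \<in> {z. \<forall>b. re_im b z \<in> A (p, b)}}"
      using T(1) by (auto simp: entry_part_def gauss_matrix_def)
    also have "emeasure (gauss_matrix M N) \<dots> = (\<Prod>p\<in>?I. emeasure (cgauss (1 / real M)) {z. \<forall>b. re_im b z \<in> A (p, b)})"
      unfolding gauss_matrix_def using A' by (intro entries.emeasure_PiM_Collect) auto
    also have "\<dots> = (\<Prod>p\<in>?I. \<Prod>b\<in>UNIV. emeasure ?G (A (p, b)))"
      using A' M_pos by (intro prod.cong refl) (simp add: emeasure_cgauss_re_im UNIV_bool mult.commute)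
    also have "\<dots> = (\<Prod>t\<in>?T. emeasure ?G (A t))"
      by (simp add: prod.cartesian_product case_prod_beta')
    also have "\<dots> = (\<Prod>t\<in>?T. emeasure (gauss_matrix M N) (entry_part t -` A t \<inter> space (gauss_matrix M N)))"
      using A' by (intro prod.cong refl emeasure_entry_part[symmetric]) auto
    finally show ?thesis .
  qed
  then show ?thesis
    using T by (subst indep_vars_finite[where E = "\<lambda>_. sets borel"])
      (auto simp: emeasure_eq_measure prod_ennreal measure_nonneg prod_nonneg Int_stable_def
        sets.sigma_sets_eq[of borel, simplified] intro: sets.sets_into_space)
qed

end

section \<open>Projections onto the columns\<close>

definition norm_sq :: "nat \<Rightarrow> (nat \<Rightarrow> complex) \<Rightarrow> real" where
  "norm_sq M x = (\<Sum>j<M. (cmod (x j))\<^sup>2)"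

lemma norm_sq_nonneg: "0 \<le> norm_sq M x"
  by (simp add: norm_sq_def sum_nonneg)

definition col_proj :: "nat \<Rightarrow> (nat \<Rightarrow> complex) \<Rightarrow> nat \<Rightarrow> (nat \<times> nat \<Rightarrow> complex) \<Rightarrow> real" where
  "col_proj M y i \<Phi> = Re (cinner M y (\<lambda>j. \<Phi> (j, i)))"

lemma sum_column_parts:
  "(\<Sum>t\<in>({..<M} \<times> {i}) \<times> UNIV. f t) = (\<Sum>j<M. f ((j, i), True) + f ((j, i), False))"
proof -
  have "(\<Sum>t\<in>({..<M} \<times> {i}) \<times> UNIV. f t) = (\<Sum>p\<in>{..<M} \<times> {i}. \<Sum>b\<in>UNIV. f (p, b))"
    by (subst sum.cartesian_product) (simp add: case_prod_beta')
  also have "\<dots> = (\<Sum>j<M. \<Sum>k\<in>{i}. \<Sum>b\<in>UNIV. f ((j, k), b))"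
    by (subst sum.cartesian_product) (simp add: case_prod_beta')
  finally show ?thesis
    by (simp add: UNIV_bool add.commute)
qed

lemma col_proj_eq_sum:
  "col_proj M y i \<Phi> = (\<Sum>t\<in>({..<M} \<times> {i}) \<times> UNIV. re_im (snd t) (y (fst (fst t))) * entry_part t \<Phi>)"
  unfolding sum_column_parts by (simp add: col_proj_def cinner_def Re_sum re_im_def entry_part_def)

lemma norm_sq_eq_sum:
  "norm_sq M y = (\<Sum>t\<in>({..<M} \<times> {i}) \<times> UNIV. (re_im (snd t) (y (fst (fst t))))\<^sup>2)"
  unfolding sum_column_parts by (simp add: norm_sq_def re_im_def cmod_power2)

lemma measurable_cnj [measurable]: "cnj \<in> borel_measurable borel"
  by (intro borel_measurable_continuous_onI continuous_intros)

context gaussian_matrix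
begin

lemma measurable_col_proj [measurable]:
  "i < N \<Longrightarrow> col_proj M y i \<in> borel_measurable (gauss_matrix M N)"
  unfolding col_proj_def cinner_def by measurable

lemma distributed_col_proj:
  assumes i: "i < N" and y: "0 < norm_sq M y"
  shows "distributed (gauss_matrix M N) lborel (col_proj M y i)
    (normal_density 0 (sqrt (norm_sq M y / (2 * real M))))"
proof -
  let ?\<sigma> = "sqrt (1 / real M / 2)" and ?a = "\<lambda>t. re_im (snd t) (y (fst (fst t)))"
  \<comment> \<open>\<open>sum_indep_normal\<close> needs positive standard deviations, so vanishing coefficients are dropped.\<close>
  define Z where "Z = {t \<in> ({..<M} \<times> {i}) \<times> UNIV. ?a t \<noteq> 0}"
  have Z: "finite Z" "Z \<subseteq> ({..<M} \<times> {..<N}) \<times> UNIV"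
    using i by (auto simp: Z_def)
  have sum_Z: "col_proj M y i = (\<lambda>\<Phi>. \<Sum>t\<in>Z. ?a t * entry_part t \<Phi>)"
    unfolding col_proj_eq_sum Z_def by (intro ext sum.mono_neutral_right) auto
  have sum_sq_Z: "norm_sq M y = (\<Sum>t\<in>Z. (?a t)\<^sup>2)"
    unfolding norm_sq_eq_sum[of M y i] Z_def by (rule sum.mono_neutral_right) auto
  have "Z \<noteq> {}"
    using y sum_sq_Z by auto
  moreover have "indep_vars (\<lambda>_. borel) (\<lambda>t \<Phi>. ?a t * entry_part t \<Phi>) Z"
    using i Z(2) by (intro indep_vars_compose2[OF indep_vars_subset[OF indep_vars_entry_part]]) auto
  moreover have "distributed (gauss_matrix M N) lborel (\<lambda>\<Phi>. ?a t * entry_part t \<Phi>)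
      (normal_density 0 (\<bar>?a t\<bar> * ?\<sigma>))" if "t \<in> Z" for t
  proof -
    have "distributed (gauss_matrix M N) lborel (\<lambda>\<Phi>. 0 + ?a t * entry_part t \<Phi>)
        (normal_density (0 + ?a t * 0) (\<bar>?a t\<bar> * ?\<sigma>))"
      using that Z(2) M_pos by (intro normal_density_affine distributed_entry_part) (auto simp: Z_def subset_iff)
    then show ?thesis
      by simp
  qed
  ultimately have "distributed (gauss_matrix M N) lborel (\<lambda>\<Phi>. \<Sum>t\<in>Z. ?a t * entry_part t \<Phi>)
      (normal_density (\<Sum>t\<in>Z. 0) (sqrt (\<Sum>t\<in>Z. (\<bar>?a t\<bar> * ?\<sigma>)\<^sup>2)))"
    using Z M_pos by (intro sum_indep_normal) (auto simp: Z_def)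
  moreover have "(\<Sum>t\<in>Z. (\<bar>?a t\<bar> * ?\<sigma>)\<^sup>2) = norm_sq M y * ?\<sigma>\<^sup>2"
    by (simp add: sum_sq_Z power_mult_distrib sum_divide_distrib)
  moreover have "norm_sq M y * ?\<sigma>\<^sup>2 = norm_sq M y / (2 * real M)"
    by simp
  ultimately show ?thesis
    by (simp add: sum_Z mult.commute)
qed

lemma indep_vars_col_proj:
  assumes "0 < N"
  shows "indep_vars (\<lambda>_. borel) (col_proj M y) {..<N}"
proof -
  let ?K = "\<lambda>i. ({..<M} \<times> {i}) \<times> (UNIV :: bool set)"
  let ?f = "\<lambda>i z. \<Sum>t\<in>?K i. re_im (snd t) (y (fst (fst t))) * z t"
  have "indep_vars (\<lambda>i. PiM (?K i) (\<lambda>_. borel)) (\<lambda>i \<Phi>. restrict (\<lambda>t. entry_part t \<Phi>) (?K i)) {..<N}"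
    by (intro indep_vars_restrict[OF indep_vars_entry_part[OF assms]])
      (auto simp: disjoint_family_on_def)
  moreover have "?f i \<in> borel_measurable (PiM (?K i) (\<lambda>_. borel))" for i
    by measurable
  ultimately have "indep_vars (\<lambda>_. borel) (\<lambda>i \<Phi>. ?f i (restrict (\<lambda>t. entry_part t \<Phi>) (?K i))) {..<N}"
    by (rule indep_vars_compose2)
  moreover have "?f i (restrict (\<lambda>t. entry_part t \<Phi>) (?K i)) = col_proj M y i \<Phi>" for i \<Phi>
    by (simp add: col_proj_eq_sum)
  ultimately show ?thesis
    by simp
qed

lemma prob_many_small_col_proj:
  assumes N: "0 < N" and y: "0 < norm_sq M y" and r: "0 \<le> r" and m: "0 < m"
  shows "prob {\<Phi> \<in> space (gauss_matrix M N). m \<le> card {i\<in>{..<N}. \<bar>col_proj M y i \<Phi>\<bar> < r}}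
    \<le> 2 ^ N * (r / sqrt (norm_sq M y / (2 * real M))) ^ m"
proof -
  let ?s = "sqrt (norm_sq M y / (2 * real M))"
  define A where "A i = {\<Phi> \<in> space (gauss_matrix M N). \<bar>col_proj M y i \<Phi>\<bar> < r}" for i
  have s: "0 < ?s"
    using y M_pos by simp
  have A_eq: "A i = col_proj M y i -` {-r<..<r} \<inter> space (gauss_matrix M N)" for i
    by (auto simp: A_def abs_less_iff)
  have "prob {\<Phi> \<in> space (gauss_matrix M N). m \<le> card {i\<in>{..<N}. \<Phi> \<in> A i}} \<le> 2 ^ card {..<N} * (r / ?s) ^ m"
  proof (rule prob_card_ge_le)
    fix S assume S: "S \<subseteq> {..<N}" "card S = m"
    then have "S \<noteq> {}" "finite S"
      using m finite_subset by auto
    then have "prob (\<Inter>i\<in>S. A i) = (\<Prod>i\<in>S. prob (A i))"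
      unfolding A_eq using S(1) by (intro indep_varsD[OF indep_vars_col_proj[OF N]]) auto
    also have "\<dots> \<le> (\<Prod>i\<in>S. r / ?s)"
      using prob_abs_less_normal[OF distributed_col_proj[OF _ y] s r] S(1)
      by (intro prod_mono) (auto simp: A_def)
    finally show "prob (\<Inter>i\<in>S. A i) \<le> (r / ?s) ^ m"
      using S by simp
  qed (use r s m in \<open>auto simp: A_eq\<close>)
  moreover have "{\<Phi> \<in> space (gauss_matrix M N). m \<le> card {i\<in>{..<N}. \<Phi> \<in> A i}}
      = {\<Phi> \<in> space (gauss_matrix M N). m \<le> card {i\<in>{..<N}. \<bar>col_proj M y i \<Phi>\<bar> < r}}"
    by (auto simp: A_def)
  ultimately show ?thesis
    by simp
qed

lemma prob_large_entry:
  "prob {\<Phi> \<in> space (gauss_matrix M N). \<exists>t\<in>({..<M} \<times> {..<N}) \<times> UNIV. 1 < \<bar>entry_part t \<Phi>\<bar>}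
    \<le> 2 * real M * real N * (sqrt 2 * exp (- (real M / 2)))"
proof -
  let ?T = "({..<M} \<times> {..<N}) \<times> (UNIV :: bool set)"
  have "{\<Phi> \<in> space (gauss_matrix M N). \<exists>t\<in>?T. 1 < \<bar>entry_part t \<Phi>\<bar>}
      = (\<Union>t\<in>?T. {\<Phi> \<in> space (gauss_matrix M N). 1 < \<bar>entry_part t \<Phi>\<bar>})"
    by auto
  also have "prob \<dots> \<le> (\<Sum>t\<in>?T. prob {\<Phi> \<in> space (gauss_matrix M N). 1 < \<bar>entry_part t \<Phi>\<bar>})"
    by (intro finite_measure_subadditive_finite) auto
  also have "\<dots> \<le> (\<Sum>t\<in>?T. sqrt 2 * exp (- (real M / 2)))"
    using prob_abs_greater_normal[OF distributed_entry_part, of _ 1] M_pos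
    by (intro sum_mono) (auto simp: power_divide)
  also have "\<dots> = 2 * real M * real N * (sqrt 2 * exp (- (real M / 2)))"
    by (simp add: card_cartesian_product)
  finally show ?thesis .
qed

end

section \<open>Projective uniformity\<close>

definition inner_sq :: "nat \<Rightarrow> (nat \<Rightarrow> complex) \<Rightarrow> (nat \<times> nat \<Rightarrow> complex) \<Rightarrow> nat \<Rightarrow> real" where
  "inner_sq M x \<Phi> i = (cmod (cinner M x (\<lambda>j. \<Phi> (j, i))))\<^sup>2"

lemma PU_ge_iff:
  assumes M: "0 < M" and N: "0 < N" and \<alpha>: "0 < \<alpha>" "\<alpha> \<le> 1"
  shows "c \<le> PU M N \<Phi> \<alpha> \<longleftrightarrow>
    (\<forall>x\<in>unit_vecs M. \<alpha> * real N \<le> real (card {i\<in>{..<N}. c \<le> inner_sq M x \<Phi> i}))"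
proof -
  define F where "F = {I. I \<subseteq> {..<N} \<and> \<alpha> * real N \<le> real (card I)}"
  define g where "g x = Sup ((\<lambda>I. Min (inner_sq M x \<Phi> ` I)) ` F)" for x
  have F: "finite F" "{..<N} \<in> F"
    using \<alpha> mult_left_le_one_le[of "real N" \<alpha>] by (auto simp: F_def intro: finite_subset[of _ "Pow {..<N}"])
  have F_ne: "I \<noteq> {}" "finite I" if "I \<in> F" for I
    using that mult_pos_pos[OF \<alpha>(1), of "real N"] N by (auto simp: F_def intro: finite_subset)
  have g: "g x = Max ((\<lambda>I. Min (inner_sq M x \<Phi> ` I)) ` F)" for x
    unfolding g_def using F by (intro cSup_eq_Max) auto
  have ge_g: "c \<le> g x \<longleftrightarrow> \<alpha> * real N \<le> real (card {i\<in>{..<N}. c \<le> inner_sq M x \<Phi> i})" for c x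
  proof -
    let ?L = "{i\<in>{..<N}. c \<le> inner_sq M x \<Phi> i}"
    have "c \<le> g x \<longleftrightarrow> (\<exists>I\<in>F. c \<le> Min (inner_sq M x \<Phi> ` I))"
      unfolding g using F by (subst Max_ge_iff) auto
    also have "\<dots> \<longleftrightarrow> (\<exists>I\<in>F. I \<subseteq> ?L)"
    proof (intro bex_cong refl)
      fix I assume "I \<in> F"
      then show "c \<le> Min (inner_sq M x \<Phi> ` I) \<longleftrightarrow> I \<subseteq> ?L"
        using F_ne[of I] by (auto simp: Min_ge_iff F_def)
    qed
    also have "\<dots> \<longleftrightarrow> ?L \<in> F"
    proof
      assume "\<exists>I\<in>F. I \<subseteq> ?L"
      then obtain I where "I \<in> F" "I \<subseteq> ?L"
        by blast
      then show "?L \<in> F"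
        using card_mono[of ?L I] by (force simp: F_def)
    qed blast
    finally show ?thesis
      by (auto simp: F_def)
  qed
  have g_nonneg: "0 \<le> g x" for x
  proof -
    have "{i\<in>{..<N}. 0 \<le> inner_sq M x \<Phi> i} = {..<N}"
      by (auto simp: inner_sq_def)
    then show ?thesis
      using ge_g[of 0 x] F(2) by (simp add: F_def)
  qed
  have "(\<Sum>j<M. (cmod (if j = 0 then 1 else 0))\<^sup>2) = 1"
  proof -
    have "(cmod (if j = 0 then 1 else 0))\<^sup>2 = (if j = 0 then 1 else (0 :: real))" for j :: nat
      by simp
    then show ?thesis
      using M by simp
  qed
  then have "(\<lambda>j. if j = 0 then 1 else 0) \<in> unit_vecs M"
    by (simp add: unit_vecs_def)
  then have "c \<le> Inf (g ` unit_vecs M) \<longleftrightarrow> (\<forall>x\<in>unit_vecs M. c \<le> g x)"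
    using g_nonneg by (subst le_cInf_iff) (auto intro: bdd_belowI[of _ 0])
  moreover have "PU M N \<Phi> \<alpha> = Inf (g ` unit_vecs M)"
    unfolding PU_def g_def F_def inner_sq_def ..
  ultimately show ?thesis
    using ge_g by simp
qed

text \<open>The scale-invariant form of the condition inside \<open>PU\<close>.  It makes sense for every \<open>x\<close>,
  and its failure is an open condition in \<open>x\<close>, so it suffices to test it on the countable set
  \<open>rat_vecs M\<close>; this is what makes \<open>PU\<close> measurable.\<close>

definition well_spread ::
  "nat \<Rightarrow> nat \<Rightarrow> real \<Rightarrow> real \<Rightarrow> (nat \<times> nat \<Rightarrow> complex) \<Rightarrow> (nat \<Rightarrow> complex) \<Rightarrow> bool" where
  "well_spread M N c \<alpha> \<Phi> x \<longleftrightarrow>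
     \<alpha> * real N \<le> real (card {i\<in>{..<N}. c * norm_sq M x \<le> inner_sq M x \<Phi> i})"

lemma inner_sq_nonneg: "0 \<le> inner_sq M x \<Phi> i"
  by (simp add: inner_sq_def)

lemma inner_sq_scale:
  "inner_sq M (\<lambda>j. x j / complex_of_real t) \<Phi> i = inner_sq M x \<Phi> i / t\<^sup>2"
  by (simp add: inner_sq_def cinner_def sum_divide_distrib[symmetric] norm_divide power_divide)

lemma norm_sq_scale: "norm_sq M (\<lambda>j. x j / complex_of_real t) = norm_sq M x / t\<^sup>2"
  by (simp add: norm_sq_def norm_divide power_divide sum_divide_distrib)

lemma well_spread_scale:
  assumes "t \<noteq> 0"
  shows "well_spread M N c \<alpha> \<Phi> (\<lambda>j. x j / complex_of_real t) \<longleftrightarrow> well_spread M N c \<alpha> \<Phi> x"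
proof -
  have "c * (a / t\<^sup>2) \<le> b / t\<^sup>2 \<longleftrightarrow> c * a \<le> b" for a b
    using assms by (simp add: field_simps)
  then show ?thesis
    unfolding well_spread_def inner_sq_scale norm_sq_scale by simp
qed

lemma well_spread_norm_sq_zero:
  assumes "norm_sq M x = 0" and "\<alpha> \<le> 1"
  shows "well_spread M N c \<alpha> \<Phi> x"
proof -
  have "{i\<in>{..<N}. c * norm_sq M x \<le> inner_sq M x \<Phi> i} = {..<N}"
    using assms(1) by (auto simp: inner_sq_nonneg)
  then show ?thesis
    using mult_right_mono[OF assms(2), of "real N"] by (simp add: well_spread_def)
qed

lemma well_spread_unit_iff:
  assumes "\<alpha> \<le> 1"
  shows "(\<forall>x\<in>unit_vecs M. \<alpha> * real N \<le> real (card {i\<in>{..<N}. c \<le> inner_sq M x \<Phi> i}))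
    \<longleftrightarrow> (\<forall>x. well_spread M N c \<alpha> \<Phi> x)"
proof -
  have "well_spread M N c \<alpha> \<Phi> x" if unit: "\<forall>x\<in>unit_vecs M. well_spread M N c \<alpha> \<Phi> x" for x
  proof (cases "norm_sq M x = 0")
    case True
    then show ?thesis
      using assms by (rule well_spread_norm_sq_zero)
  next
    case False
    then have pos: "0 < norm_sq M x"
      using norm_sq_nonneg[of M x] by linarith
    have "(\<lambda>j. x j / complex_of_real (sqrt (norm_sq M x))) \<in> unit_vecs M"
      using pos norm_sq_scale[of M x "sqrt (norm_sq M x)"] by (simp add: unit_vecs_def norm_sq_def)
    then have "well_spread M N c \<alpha> \<Phi> (\<lambda>j. x j / complex_of_real (sqrt (norm_sq M x)))"
      using unit by blast
    then show ?thesis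
      using pos well_spread_scale[of "sqrt (norm_sq M x)"] by simp
  qed
  moreover have "well_spread M N c \<alpha> \<Phi> x
      \<longleftrightarrow> \<alpha> * real N \<le> real (card {i\<in>{..<N}. c \<le> inner_sq M x \<Phi> i})" if "x \<in> unit_vecs M" for x
    using that by (simp add: unit_vecs_def norm_sq_def well_spread_def)
  ultimately show ?thesis
    by blast
qed

definition rat_vecs :: "nat \<Rightarrow> (nat \<Rightarrow> complex) set" where
  "rat_vecs M = PiE {..<M} (\<lambda>_. {Complex a b |a b. a \<in> \<rat> \<and> b \<in> \<rat>})"

lemma countable_rat_vecs: "countable (rat_vecs M)"
proof -
  have "{Complex a b |a b. a \<in> \<rat> \<and> b \<in> \<rat>} = (\<lambda>(a, b). Complex a b) ` (\<rat> \<times> \<rat>)"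
    by auto
  then show ?thesis
    unfolding rat_vecs_def using countable_rat by (intro countable_PiE) auto
qed

lemma rat_vecs_approx: "\<exists>q. (\<forall>k. q k \<in> rat_vecs M) \<and> (\<forall>j<M. (\<lambda>k. q k j) \<longlonglongrightarrow> x j)"
proof -
  define Q where "Q = {Complex a b |a b. a \<in> \<rat> \<and> b \<in> \<rat>}"
  have "\<exists>z\<in>Q. cmod (z - w) < e" if "0 < e" for w e
  proof -
    obtain a where "a \<in> \<rat>" "Re w - e / 2 < a" "a < Re w + e / 2"
      using Rats_dense_in_real[of "Re w - e / 2" "Re w + e / 2"] \<open>0 < e\<close> by auto
    moreover obtain b where "b \<in> \<rat>" "Im w - e / 2 < b" "b < Im w + e / 2"
      using Rats_dense_in_real[of "Im w - e / 2" "Im w + e / 2"] \<open>0 < e\<close> by auto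
    moreover have "cmod (Complex a b - w) \<le> \<bar>a - Re w\<bar> + \<bar>b - Im w\<bar>"
      using cmod_le[of "Complex a b - w"] by simp
    ultimately show ?thesis
      by (intro bexI[of _ "Complex a b"]) (auto simp: Q_def)
  qed
  then have "\<forall>p. \<exists>z. z \<in> Q \<and> cmod (z - x (snd p)) < inverse (real (Suc (fst p)))"
    by (metis of_nat_0_less_iff positive_imp_inverse_positive zero_less_Suc)
  then obtain f where "\<forall>p. f p \<in> Q \<and> cmod (f p - x (snd p)) < inverse (real (Suc (fst p)))"
    by (rule choice[THEN exE])
  then have f: "\<And>k j. f (k, j) \<in> Q" "\<And>k j. cmod (f (k, j) - x j) < inverse (real (Suc k))"
    by (metis fst_conv snd_conv)+
  have "(\<lambda>k. f (k, j) - x j) \<longlonglongrightarrow> 0" for j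
    using f(2) by (intro Lim_null_comparison[OF _ LIMSEQ_inverse_real_of_nat] always_eventually allI less_imp_le)
  then have "(\<lambda>k. f (k, j) - x j + x j) \<longlonglongrightarrow> 0 + x j" for j
    by (intro tendsto_add tendsto_const)
  then have "(\<lambda>k. f (k, j)) \<longlonglongrightarrow> x j" for j
    by simp
  moreover have "restrict (\<lambda>j. f (k, j)) {..<M} \<in> rat_vecs M" for k
    using f(1) by (simp add: rat_vecs_def Q_def[symmetric])
  ultimately show ?thesis
    by (intro exI[of _ "\<lambda>k. restrict (\<lambda>j. f (k, j)) {..<M}"]) auto
qed

lemma tendsto_inner_sq:
  assumes "\<forall>j<M. (\<lambda>k. q k j) \<longlonglongrightarrow> x j"
  shows "(\<lambda>k. inner_sq M (q k) \<Phi> i) \<longlonglongrightarrow> inner_sq M x \<Phi> i"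
  unfolding inner_sq_def cinner_def using assms by (intro tendsto_power tendsto_norm tendsto_sum tendsto_mult tendsto_const) auto

lemma tendsto_norm_sq:
  assumes "\<forall>j<M. (\<lambda>k. q k j) \<longlonglongrightarrow> x j"
  shows "(\<lambda>k. norm_sq M (q k)) \<longlonglongrightarrow> norm_sq M x"
  unfolding norm_sq_def using assms by (intro tendsto_power tendsto_norm tendsto_sum) auto

lemma well_spread_rat_vecs_iff:
  assumes "\<alpha> \<le> 1"
  shows "(\<forall>x. well_spread M N c \<alpha> \<Phi> x) \<longleftrightarrow> (\<forall>q\<in>rat_vecs M. well_spread M N c \<alpha> \<Phi> q)"
proof (intro iffI ballI allI)
  fix x assume rat: "\<forall>q\<in>rat_vecs M. well_spread M N c \<alpha> \<Phi> q"
  show "well_spread M N c \<alpha> \<Phi> x"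
  proof (rule ccontr)
    assume bad: "\<not> well_spread M N c \<alpha> \<Phi> x"
    define S where "S = {i\<in>{..<N}. inner_sq M x \<Phi> i < c * norm_sq M x}"
    obtain q where q: "\<And>k. q k \<in> rat_vecs M" "\<forall>j<M. (\<lambda>k. q k j) \<longlonglongrightarrow> x j"
      using rat_vecs_approx by blast
    have "(\<lambda>k. c * norm_sq M (q k) - inner_sq M (q k) \<Phi> i) \<longlonglongrightarrow> c * norm_sq M x - inner_sq M x \<Phi> i" for i
      by (intro tendsto_diff tendsto_mult tendsto_const tendsto_inner_sq tendsto_norm_sq q(2))
    then have "\<forall>\<^sub>F k in sequentially. \<forall>i\<in>S. 0 < c * norm_sq M (q k) - inner_sq M (q k) \<Phi> i"
      by (intro eventually_ball_finite ballI order_tendstoD(1)) (auto simp: S_def)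
    then obtain k where k: "\<forall>i\<in>S. inner_sq M (q k) \<Phi> i < c * norm_sq M (q k)"
      unfolding eventually_sequentially by force
    have sub: "{i\<in>{..<N}. c * norm_sq M (q k) \<le> inner_sq M (q k) \<Phi> i}
        \<subseteq> {i\<in>{..<N}. c * norm_sq M x \<le> inner_sq M x \<Phi> i}"
      using k by (auto simp: S_def not_less[symmetric])
    have "\<not> well_spread M N c \<alpha> \<Phi> (q k)"
      using bad card_mono[OF _ sub] by (force simp: well_spread_def)
    then show False
      using rat q(1) by blast
  qed
qed simp

context gaussian_matrix
begin

lemma measurable_inner_sq [measurable]:
  "i < N \<Longrightarrow> (\<lambda>\<Phi>. inner_sq M x \<Phi> i) \<in> borel_measurable (gauss_matrix M N)"
  unfolding inner_sq_def cinner_def by measurable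

lemma sets_PU_ge:
  assumes "0 < N" and "0 < \<alpha>" "\<alpha> \<le> 1"
  shows "{\<Phi> \<in> space (gauss_matrix M N). c \<le> PU M N \<Phi> \<alpha>} \<in> events"
proof -
  have "{\<Phi> \<in> space (gauss_matrix M N). c \<le> PU M N \<Phi> \<alpha>}
      = {\<Phi> \<in> space (gauss_matrix M N). \<forall>q\<in>rat_vecs M. well_spread M N c \<alpha> \<Phi> q}"
    by (intro Collect_cong conj_cong refl) (simp only: PU_ge_iff[OF M_pos assms]
        well_spread_unit_iff[OF assms(3)] well_spread_rat_vecs_iff[OF assms(3)])
  also have "\<dots> \<in> events"
    unfolding well_spread_def
    by (intro sets.sets_Collect_countable_All' sets_card_ge countable_rat_vecs) measurable
  finally show ?thesis .
qed

end

section \<open>Nets and the failure probability\<close>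

definition grid :: "real \<Rightarrow> int \<Rightarrow> complex set" where
  "grid h K = (\<lambda>(a, b). Complex (h * of_int a) (h * of_int b)) ` ({-K..K} \<times> {-K..K})"

definition net :: "nat \<Rightarrow> real \<Rightarrow> int \<Rightarrow> (nat \<Rightarrow> complex) set" where
  "net M h K = PiE {..<M} (\<lambda>_. grid h K)"

definition round_vec :: "nat \<Rightarrow> real \<Rightarrow> (nat \<Rightarrow> complex) \<Rightarrow> nat \<Rightarrow> complex" where
  "round_vec M h x = restrict (\<lambda>j. Complex (h * of_int (round (Re (x j) / h))) (h * of_int (round (Im (x j) / h)))) {..<M}"

lemma finite_net: "finite (net M h K)"
  by (simp add: net_def grid_def finite_PiE)

lemma card_net_le:
  assumes "0 \<le> K"
  shows "real (card (net M h K)) \<le> (2 * of_int K + 1) ^ (2 * M)"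
proof -
  have "card (grid h K) \<le> card ({-K..K} \<times> {-K..K})"
    unfolding grid_def by (rule card_image_le) simp
  also have "\<dots> = nat (2 * K + 1) ^ 2"
    by (simp add: card_cartesian_product power2_eq_square)
  finally have "real (card (grid h K)) \<le> real (nat (2 * K + 1) ^ 2)"
    by (rule of_nat_mono)
  then have "real (card (grid h K)) \<le> (2 * of_int K + 1) ^ 2"
    using assms by simp
  then have "real (card (grid h K)) ^ M \<le> ((2 * of_int K + 1) ^ 2) ^ M"
    by (intro power_mono) auto
  then show ?thesis
    by (simp add: net_def card_PiE power_mult)
qed

lemma round_error:
  fixes u h :: real
  assumes "0 < h"
  shows "\<bar>h * of_int (round (u / h)) - u\<bar> \<le> h / 2"
proof -
  have "h * of_int (round (u / h)) - u = h * (of_int (round (u / h)) - u / h)"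
    using assms by (simp add: algebra_simps)
  then have "\<bar>h * of_int (round (u / h)) - u\<bar> = h * \<bar>of_int (round (u / h)) - u / h\<bar>"
    using assms by (simp add: abs_mult)
  also have "\<dots> \<le> h * (1 / 2)"
    using assms of_int_round_abs_le[of "u / h"] by (intro mult_left_mono) auto
  finally show ?thesis
    by simp
qed

lemma round_in_range:
  fixes u h :: real
  assumes "0 < h" and "\<bar>u\<bar> \<le> 1" and "1 / h + 1 \<le> of_int K"
  shows "round (u / h) \<in> {-K..K}"
proof -
  have "\<bar>u / h\<bar> \<le> 1 / h"
    using assms(1,2) by (simp add: abs_div divide_right_mono)
  moreover have "\<bar>(of_int (round (u / h)) :: real) - u / h\<bar> \<le> 1 / 2"
    by (rule of_int_round_abs_le)
  ultimately have "\<bar>(of_int (round (u / h)) :: real)\<bar> < of_int K"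
    using assms(3) by linarith
  then show ?thesis
    by simp linarith
qed

lemma sq_ge_of_close:
  fixes a b h :: real
  assumes "0 \<le> a" "a \<le> 1" "0 \<le> b" "a - h \<le> b" "0 < h"
  shows "a\<^sup>2 - 2 * h \<le> b\<^sup>2"
proof (cases "a \<le> h")
  case True
  then have "a\<^sup>2 \<le> h"
    using assms(1,2) mult_left_le_one_le[of a a] by (simp add: power2_eq_square)
  then show ?thesis
    using assms(5) zero_le_power2[of b] by linarith
next
  case False
  then have "(a - h)\<^sup>2 \<le> b\<^sup>2"
    using assms(4) by (intro power_mono) auto
  moreover have "(a - h)\<^sup>2 = a\<^sup>2 - 2 * (a * h) + h\<^sup>2"
    by (simp add: power2_eq_square algebra_simps)
  moreover have "a * h \<le> h"
    using assms(2,5) by (simp add: mult_left_le_one_le)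
  ultimately show ?thesis
    using zero_le_power2[of h] by linarith
qed

lemma unit_vecs_coord_le_1:
  assumes "x \<in> unit_vecs M" and "j < M"
  shows "cmod (x j) \<le> 1"
proof -
  have "(cmod (x j))\<^sup>2 \<le> (\<Sum>j<M. (cmod (x j))\<^sup>2)"
    using assms(2) by (intro member_le_sum) auto
  then show ?thesis
    using assms(1) by (simp add: unit_vecs_def power_le_one_iff abs_square_le_1)
qed

lemma round_vec_props:
  assumes h: "0 < h" and x: "x \<in> unit_vecs M" and K: "1 / h + 1 \<le> of_int K"
  shows "round_vec M h x \<in> net M h K"
    and "\<And>j. j < M \<Longrightarrow> cmod (round_vec M h x j - x j) \<le> h"
    and "1 - 2 * h * real M \<le> norm_sq M (round_vec M h x)"
proof -
  have re_im: "\<bar>Re (x j)\<bar> \<le> 1" "\<bar>Im (x j)\<bar> \<le> 1" if "j < M" for j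
    using unit_vecs_coord_le_1[OF x that] abs_Re_le_cmod[of "x j"] abs_Im_le_cmod[of "x j"] by linarith+
  show "round_vec M h x \<in> net M h K"
    using round_in_range[OF h re_im(1) K] round_in_range[OF h re_im(2) K]
    by (auto simp: net_def round_vec_def grid_def)
  show err: "cmod (round_vec M h x j - x j) \<le> h" if j: "j < M" for j
    using cmod_le[of "round_vec M h x j - x j"] round_error[OF h, of "Re (x j)"] round_error[OF h, of "Im (x j)"] j
    by (simp add: round_vec_def)
  have "(cmod (x j))\<^sup>2 - 2 * h \<le> (cmod (round_vec M h x j))\<^sup>2" if j: "j < M" for j
  proof (rule sq_ge_of_close[OF _ unit_vecs_coord_le_1[OF x j] _ _ h])
    show "cmod (x j) - h \<le> cmod (round_vec M h x j)"
      using norm_triangle_ineq3[of "round_vec M h x j" "x j"] err[OF j] by linarith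
  qed auto
  then have "(\<Sum>j<M. (cmod (x j))\<^sup>2 - 2 * h) \<le> norm_sq M (round_vec M h x)"
    unfolding norm_sq_def by (intro sum_mono) auto
  then show "1 - 2 * h * real M \<le> norm_sq M (round_vec M h x)"
    using x by (simp add: unit_vecs_def sum_subtractf algebra_simps)
qed

lemma abs_col_proj_le:
  assumes entries: "\<And>j b. j < M \<Longrightarrow> \<bar>entry_part ((j, i), b) \<Phi>\<bar> \<le> 1"
    and close: "\<And>j. j < M \<Longrightarrow> cmod (y j - x j) \<le> h"
  shows "\<bar>col_proj M y i \<Phi>\<bar> \<le> sqrt (inner_sq M x \<Phi> i) + 2 * h * real M"
proof -
  let ?\<phi> = "\<lambda>j. \<Phi> (j, i)"
  have "cmod (cinner M y ?\<phi> - cinner M x ?\<phi>) \<le> (\<Sum>j<M. cmod (y j - x j) * cmod (?\<phi> j))"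
    unfolding cinner_def sum_subtractf[symmetric]
    by (rule order_trans[OF norm_sum]) (simp add: norm_mult flip: left_diff_distrib)
  also have "\<dots> \<le> (\<Sum>j<M. h * 2)"
  proof (intro sum_mono mult_mono)
    fix j assume "j \<in> {..<M}"
    then show "cmod (?\<phi> j) \<le> 2" "cmod (y j - x j) \<le> h"
      using cmod_le[of "?\<phi> j"] entries[of j True] entries[of j False] close[of j]
      by (auto simp: entry_part_def re_im_def)
    show "0 \<le> h"
      using close[of j] \<open>j \<in> {..<M}\<close> norm_ge_zero order_trans by blast
  qed simp_all
  also have "\<dots> = 2 * h * real M"
    by simp
  finally have "cmod (cinner M y ?\<phi>) \<le> cmod (cinner M x ?\<phi>) + 2 * h * real M"
    using norm_triangle_ineq2[of "cinner M y ?\<phi>" "cinner M x ?\<phi>"] by linarith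
  then show ?thesis
    using abs_Re_le_cmod[of "cinner M y ?\<phi>"] by (simp add: col_proj_def inner_sq_def)
qed

lemma net_witness:
  assumes entries: "\<forall>t\<in>({..<M} \<times> {..<N}) \<times> UNIV. \<bar>entry_part t \<Phi>\<bar> \<le> 1"
    and x: "x \<in> unit_vecs M"
    and few: "real (card {i\<in>{..<N}. c \<le> inner_sq M x \<Phi> i}) < \<alpha> * real N" and \<alpha>: "\<alpha> \<le> 1"
    and h: "0 < h" "2 * h * real M \<le> sqrt c" "sqrt c \<le> 1 / 4" and K: "1 / h + 1 \<le> of_int K"
  shows "\<exists>y\<in>net M h K. 1 / 2 \<le> norm_sq M y \<and>
    nat \<lfloor>(1 - \<alpha>) * real N\<rfloor> + 1 \<le> card {i\<in>{..<N}. \<bar>col_proj M y i \<Phi>\<bar> < 2 * sqrt c}"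
proof (intro bexI conjI)
  let ?y = "round_vec M h x" and ?S = "{i\<in>{..<N}. inner_sq M x \<Phi> i < c}"
  show "?y \<in> net M h K" "1 / 2 \<le> norm_sq M ?y"
    using round_vec_props[OF h(1) x K] h by auto
  let ?L = "{i\<in>{..<N}. c \<le> inner_sq M x \<Phi> i}"
  have "?S = {..<N} - ?L" "?L \<subseteq> {..<N}"
    by auto
  then have "real (card ?S) = real N - real (card ?L)"
    using card_mono[of "{..<N}" ?L] by (simp add: card_Diff_subset of_nat_diff)
  then have "(1 - \<alpha>) * real N < real (card ?S)"
    using few by (simp add: algebra_simps)
  then have "\<lfloor>(1 - \<alpha>) * real N\<rfloor> < int (card ?S)"
    by (simp add: floor_less_iff)
  moreover have "0 \<le> \<lfloor>(1 - \<alpha>) * real N\<rfloor>"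
    using \<alpha> by simp
  ultimately have "nat \<lfloor>(1 - \<alpha>) * real N\<rfloor> < card ?S"
    by (simp add: nat_less_iff)
  then have "nat \<lfloor>(1 - \<alpha>) * real N\<rfloor> + 1 \<le> card ?S"
    by simp
  also have "card ?S \<le> card {i\<in>{..<N}. \<bar>col_proj M ?y i \<Phi>\<bar> < 2 * sqrt c}"
  proof (intro card_mono subsetI)
    fix i assume i: "i \<in> ?S"
    have "\<bar>col_proj M ?y i \<Phi>\<bar> \<le> sqrt (inner_sq M x \<Phi> i) + 2 * h * real M"
      using entries i round_vec_props(2)[OF h(1) x K] by (intro abs_col_proj_le) auto
    moreover have "sqrt (inner_sq M x \<Phi> i) < sqrt c"
      using i by simp
    ultimately have "\<bar>col_proj M ?y i \<Phi>\<bar> < 2 * sqrt c"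
      using h(2) by linarith
    then show "i \<in> {i\<in>{..<N}. \<bar>col_proj M ?y i \<Phi>\<bar> < 2 * sqrt c}"
      using i by simp
  qed simp
  finally show "nat \<lfloor>(1 - \<alpha>) * real N\<rfloor> + 1 \<le> card {i\<in>{..<N}. \<bar>col_proj M ?y i \<Phi>\<bar> < 2 * sqrt c}" .
qed

lemma PU_less_cases:
  assumes "0 < M" "0 < N" and \<alpha>: "0 < \<alpha>" "\<alpha> \<le> 1"
    and h: "0 < h" "2 * h * real M \<le> sqrt c" "sqrt c \<le> 1 / 4" and K: "1 / h + 1 \<le> of_int K"
    and PU: "\<not> c \<le> PU M N \<Phi> \<alpha>"
  shows "(\<exists>t\<in>({..<M} \<times> {..<N}) \<times> UNIV. 1 < \<bar>entry_part t \<Phi>\<bar>) \<or>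
    (\<exists>y\<in>net M h K. 1 / 2 \<le> norm_sq M y \<and>
      nat \<lfloor>(1 - \<alpha>) * real N\<rfloor> + 1 \<le> card {i\<in>{..<N}. \<bar>col_proj M y i \<Phi>\<bar> < 2 * sqrt c})"
proof (cases "\<exists>t\<in>({..<M} \<times> {..<N}) \<times> UNIV. 1 < \<bar>entry_part t \<Phi>\<bar>")
  case False
  then have entries: "\<forall>t\<in>({..<M} \<times> {..<N}) \<times> UNIV. \<bar>entry_part t \<Phi>\<bar> \<le> 1"
    by (auto simp: not_less)
  obtain x where "x \<in> unit_vecs M" "real (card {i\<in>{..<N}. c \<le> inner_sq M x \<Phi> i}) < \<alpha> * real N"
    using PU PU_ge_iff[OF assms(1,2) \<alpha>] by (auto simp: not_le)
  with net_witness[OF entries this \<alpha>(2) h K] show ?thesis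
    by blast
qed simp

context gaussian_matrix
begin

lemma prob_many_small_col_proj_half_norm:
  assumes N: "0 < N" and y: "1 / 2 \<le> norm_sq M y" and c: "0 \<le> c" and m: "0 < m"
  shows "prob {\<Phi> \<in> space (gauss_matrix M N). m \<le> card {i\<in>{..<N}. \<bar>col_proj M y i \<Phi>\<bar> < 2 * sqrt c}}
    \<le> 2 ^ N * (4 * sqrt (c * real M)) ^ m"
proof -
  let ?s = "sqrt (norm_sq M y / (2 * real M))"
  have "sqrt (1 / (4 * real M)) \<le> ?s"
    using y M_pos by (intro real_sqrt_le_mono) (simp add: field_simps)
  then have "4 * sqrt (c * real M) * sqrt (1 / (4 * real M)) \<le> 4 * sqrt (c * real M) * ?s"
    using c by (intro mult_left_mono) auto
  moreover have "4 * sqrt (c * real M) * sqrt (1 / (4 * real M)) = 2 * sqrt c"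
    using M_pos by (simp add: real_sqrt_mult real_sqrt_divide)
  ultimately have "2 * sqrt c / ?s \<le> 4 * sqrt (c * real M)"
    using y M_pos by (simp add: divide_le_eq)
  then have "(2 * sqrt c / ?s) ^ m \<le> (4 * sqrt (c * real M)) ^ m"
    using c by (intro power_mono divide_nonneg_nonneg) (auto simp: norm_sq_nonneg)
  moreover have "prob {\<Phi> \<in> space (gauss_matrix M N). m \<le> card {i\<in>{..<N}. \<bar>col_proj M y i \<Phi>\<bar> < 2 * sqrt c}}
      \<le> 2 ^ N * (2 * sqrt c / ?s) ^ m"
    using y c by (intro prob_many_small_col_proj[OF N _ _ m]) auto
  ultimately show ?thesis
    by (meson mult_left_mono order_trans zero_le_numeral zero_le_power)
qed

lemma prob_PU_ge_lower_bound:
  assumes N: "0 < N" and \<alpha>: "0 < \<alpha>" "\<alpha> \<le> 1"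
    and h: "0 < h" "2 * h * real M \<le> sqrt c" "sqrt c \<le> 1 / 4" and K: "1 / h + 1 \<le> of_int K"
  shows "1 - (2 * real M * real N * (sqrt 2 * exp (- (real M / 2)))
      + (2 * of_int K + 1) ^ (2 * M) * (2 ^ N * (4 * sqrt (c * real M)) ^ (nat \<lfloor>(1 - \<alpha>) * real N\<rfloor> + 1)))
    \<le> prob {\<Phi> \<in> space (gauss_matrix M N). c \<le> PU M N \<Phi> \<alpha>}"
proof -
  let ?T = "({..<M} \<times> {..<N}) \<times> (UNIV :: bool set)" and ?m = "nat \<lfloor>(1 - \<alpha>) * real N\<rfloor> + 1"
  define Good where "Good = {\<Phi> \<in> space (gauss_matrix M N). c \<le> PU M N \<Phi> \<alpha>}"
  define Large where "Large = {\<Phi> \<in> space (gauss_matrix M N). \<exists>t\<in>?T. 1 < \<bar>entry_part t \<Phi>\<bar>}"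
  define Small where "Small y = {\<Phi> \<in> space (gauss_matrix M N).
    ?m \<le> card {i\<in>{..<N}. \<bar>col_proj M y i \<Phi>\<bar> < 2 * sqrt c}}" for y
  define Y where "Y = {y \<in> net M h K. 1 / 2 \<le> norm_sq M y}"
  have "0 < sqrt c"
    using h M_pos mult_pos_pos[of "2 * h" "real M"] by linarith
  then have c: "0 \<le> c"
    by simp
  have "0 \<le> K"
    using h(1) K by (smt (verit) divide_pos_pos of_int_0_le_iff)
  then have card_Y: "real (card Y) \<le> (2 * of_int K + 1) ^ (2 * M)"
    using card_net_le[of K M h] card_mono[OF finite_net, of Y] by (force simp: Y_def)
  have "Good \<in> events"
    using sets_PU_ge[OF N \<alpha>] by (simp add: Good_def)
  moreover have "Large \<in> events"
    unfolding Large_def by (intro sets.sets_Collect_countable_Ex' countable_finite) auto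
  moreover have "Small y \<in> events" for y
    using sets_card_ge[of "{..<N}" "gauss_matrix M N" "\<lambda>i \<Phi>. \<bar>col_proj M y i \<Phi>\<bar> < 2 * sqrt c" "real ?m"]
    by (simp add: Small_def)
  moreover have "space (gauss_matrix M N) - Good \<subseteq> Large \<union> (\<Union>y\<in>Y. Small y)"
    using PU_less_cases[OF M_pos N \<alpha> h K] by (fastforce simp: Good_def Large_def Small_def Y_def)
  moreover have "prob (Small y) \<le> 2 ^ N * (4 * sqrt (c * real M)) ^ ?m" if "y \<in> Y" for y
    using that c unfolding Small_def Y_def by (intro prob_many_small_col_proj_half_norm[OF N]) auto
  ultimately have "1 - (prob Large + real (card Y) * (2 ^ N * (4 * sqrt (c * real M)) ^ ?m)) \<le> prob Good"
    using finite_net by (intro prob_ge_one_minus_union_bound) (auto simp: Y_def)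
  moreover have "prob Large \<le> 2 * real M * real N * (sqrt 2 * exp (- (real M / 2)))"
    unfolding Large_def by (rule prob_large_entry)
  moreover have "real (card Y) * (2 ^ N * (4 * sqrt (c * real M)) ^ ?m)
      \<le> (2 * of_int K + 1) ^ (2 * M) * (2 ^ N * (4 * sqrt (c * real M)) ^ ?m)"
    using card_Y c by (intro mult_right_mono) auto
  ultimately show ?thesis
    unfolding Good_def by linarith
qed

lemma prob_PU_ge_scaled_lower_bound:
  assumes N: "0 < N" and \<alpha>: "0 < \<alpha>" "\<alpha> \<le> 1" and Cp: "0 < Cp" "Cp \<le> 1 / 16"
  shows "1 - (2 * real M * real N * (sqrt 2 * exp (- (real M / 2)))
      + (4 * real M * sqrt (real M) / sqrt Cp + 5) ^ (2 * M)
        * (2 ^ N * (4 * sqrt Cp) ^ (nat \<lfloor>(1 - \<alpha>) * real N\<rfloor> + 1)))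
    \<le> prob {\<Phi> \<in> space (gauss_matrix M N). Cp / real M \<le> PU M N \<Phi> \<alpha>}"
proof -
  define c where "c = Cp / real M"
  define h where "h = sqrt c / (2 * real M)"
  define K where "K = \<lceil>1 / h\<rceil> + 1"
  have M: "1 \<le> real M"
    using M_pos by simp
  have c: "0 < c" "c \<le> Cp"
    using Cp M by (auto simp: c_def divide_le_eq)
  have "sqrt c \<le> sqrt (1 / 16)"
    using c Cp by (intro real_sqrt_le_mono) simp
  then have "sqrt c \<le> 1 / 4"
    by (simp add: real_sqrt_divide)
  moreover have "0 < h" "2 * h * real M = sqrt c" "1 / h + 1 \<le> of_int K"
    using c M_pos by (auto simp: h_def K_def)
  ultimately have bound: "1 - (2 * real M * real N * (sqrt 2 * exp (- (real M / 2)))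
      + (2 * of_int K + 1) ^ (2 * M) * (2 ^ N * (4 * sqrt Cp) ^ (nat \<lfloor>(1 - \<alpha>) * real N\<rfloor> + 1)))
    \<le> prob {\<Phi> \<in> space (gauss_matrix M N). Cp / real M \<le> PU M N \<Phi> \<alpha>}"
    using prob_PU_ge_lower_bound[OF N \<alpha>, of h c K] M_pos by (simp add: c_def)
  have "4 * real M * sqrt (real M) / sqrt Cp = 2 * (1 / h)"
    using M_pos Cp by (simp add: h_def c_def real_sqrt_divide field_simps)
  moreover have "of_int K \<le> 1 / h + 2"
    using of_int_ceiling_le_add_one[of "1 / h"] unfolding K_def of_int_add of_int_1 by linarith
  moreover have "1 / h \<le> of_int K"
    using le_of_int_ceiling[of "1 / h"] unfolding K_def of_int_add of_int_1 by linarith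
  moreover have "0 < 1 / h"
    using \<open>0 < h\<close> by simp
  ultimately have "(0 :: real) \<le> 2 * of_int K + 1" "2 * of_int K + 1 \<le> 4 * real M * sqrt (real M) / sqrt Cp + 5"
    by linarith+
  then have "(2 * of_int K + 1) ^ (2 * M) * (2 ^ N * (4 * sqrt Cp) ^ (nat \<lfloor>(1 - \<alpha>) * real N\<rfloor> + 1))
      \<le> (4 * real M * sqrt (real M) / sqrt Cp + 5) ^ (2 * M)
        * (2 ^ N * (4 * sqrt Cp) ^ (nat \<lfloor>(1 - \<alpha>) * real N\<rfloor> + 1))"
    using Cp by (intro mult_right_mono power_mono) auto
  then show ?thesis
    using bound by linarith
qed

end

section \<open>Asymptotics\<close>

lemma asymp_equiv_eventually_between:
  fixes f g :: "nat \<Rightarrow> real"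
  assumes fg: "f \<sim>[at_top] g" and g: "\<forall>\<^sub>F M in at_top. 0 < g M"
  shows "\<forall>\<^sub>F M in at_top. g M / 2 \<le> f M \<and> f M \<le> 2 * g M"
proof -
  let ?r = "\<lambda>M. if f M = 0 \<and> g M = 0 then 1 else f M / g M"
  have "(?r \<longlongrightarrow> 1) at_top"
    by (rule asymp_equivD[OF fg])
  then have "\<forall>\<^sub>F M in at_top. 1 / 2 < ?r M \<and> ?r M < 2"
    by (intro eventually_conj order_tendstoD) auto
  with g show ?thesis
    by eventually_elim (auto simp: field_simps split: if_splits)
qed

lemma two_pow_mult_pow_le_exp:
  fixes q L \<alpha> :: real
  assumes q: "0 < q" "ln q \<le> - (L + 1) / (1 - \<alpha>)" and L: "0 \<le> L" and \<alpha>: "\<alpha> < 1"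
  shows "2 ^ N * q ^ (nat \<lfloor>(1 - \<alpha>) * real N\<rfloor> + 1) \<le> exp (- L * real N)"
proof -
  let ?m = "nat \<lfloor>(1 - \<alpha>) * real N\<rfloor> + 1"
  have "0 < (L + 1) / (1 - \<alpha>)"
    using L \<alpha> by simp
  then have "ln q < 0"
    using q(2) by linarith
  have "(1 - \<alpha>) * real N \<le> real ?m"
    using \<alpha> by linarith
  then have "real ?m * ln q \<le> (1 - \<alpha>) * real N * ln q"
    using \<open>ln q < 0\<close> by (intro mult_right_mono_neg) auto
  also have "\<dots> = ((1 - \<alpha>) * ln q) * real N"
    by simp
  also have "\<dots> \<le> - (L + 1) * real N"
    using q(2) \<alpha> by (intro mult_right_mono) (simp_all add: field_simps)
  finally have "exp (real ?m * ln q) \<le> exp (- (L + 1) * real N)"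
    by simp
  moreover have "exp (real ?m * ln q) = q ^ ?m"
    using q(1) by (subst exp_of_nat_mult) simp
  ultimately have "q ^ ?m \<le> exp (- (L + 1) * real N)"
    by metis
  moreover have "(2 :: real) ^ N \<le> exp 1 ^ N"
    using exp_ge_add_one_self[of 1] by (intro power_mono) auto
  then have "(2 :: real) ^ N \<le> exp (real N)"
    using exp_of_nat_mult[of N "1 :: real"] by simp
  ultimately have "2 ^ N * q ^ ?m \<le> exp (real N) * exp (- (L + 1) * real N)"
    using q(1) by (intro mult_mono) auto
  also have "\<dots> = exp (- L * real N)"
    by (simp add: exp_add[symmetric] algebra_simps)
  finally show ?thesis .
qed

lemma overwhelming_of_eventually:
  fixes p :: "nat \<Rightarrow> real" and c1 :: real
  assumes ev: "\<forall>\<^sub>F M in at_top. 1 - exp (- c1 * real M) \<le> p M" and p: "\<And>M. 0 \<le> p M" and c1: "0 \<le> c1"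
  shows "\<exists>c0>0. \<forall>M. 1 - c0 * exp (- c1 * real M) \<le> p M"
proof -
  obtain M0 where M0: "\<And>M. M0 \<le> M \<Longrightarrow> 1 - exp (- c1 * real M) \<le> p M"
    using ev by (auto simp: eventually_at_top_linorder)
  have "1 - exp (c1 * real M0) * exp (- c1 * real M) \<le> p M" for M
  proof (cases "M0 \<le> M")
    case True
    have "1 \<le> exp (c1 * real M0)"
      using c1 by simp
    then have "exp (- c1 * real M) \<le> exp (c1 * real M0) * exp (- c1 * real M)"
      by simp
    then show ?thesis
      using M0[OF True] by linarith
  next
    case False
    then have "1 \<le> exp (c1 * real M0) * exp (- c1 * real M)"
      using c1 by (simp add: exp_add[symmetric] mult_left_mono algebra_simps)
    then show ?thesis
      using p[of M] by linarith
  qed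
  then show ?thesis
    by (intro exI[of _ "exp (c1 * real M0)"]) auto
qed

lemma failure_terms_le:
  fixes C Cp \<alpha> :: real and M N :: nat
  assumes M: "1 \<le> M" and C: "0 < C" and Cp: "0 < Cp" and \<alpha>: "\<alpha> < 1"
    and q: "ln (4 * sqrt Cp) \<le> - (10 / C + 1) / (1 - \<alpha>)"
    and N: "C * real M * ln (real M) / 2 \<le> real N" "real N \<le> 2 * (C * real M * ln (real M))"
  shows "2 * real M * real N * (sqrt 2 * exp (- (real M / 2)))
      + (4 * real M * sqrt (real M) / sqrt Cp + 5) ^ (2 * M)
        * (2 ^ N * (4 * sqrt Cp) ^ (nat \<lfloor>(1 - \<alpha>) * real N\<rfloor> + 1))
    \<le> 4 * sqrt 2 * C * real M * real M * ln (real M) * exp (- (real M / 2))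
      + exp (2 * real M * ln (4 * real M * sqrt (real M) / sqrt Cp + 5) - 5 * real M * ln (real M))"
proof (rule add_mono)
  have "2 * real M * real N * (sqrt 2 * exp (- (real M / 2)))
      = (2 * real M * sqrt 2 * exp (- (real M / 2))) * real N"
    by simp
  also have "\<dots> \<le> (2 * real M * sqrt 2 * exp (- (real M / 2))) * (2 * (C * real M * ln (real M)))"
    using N(2) by (intro mult_left_mono) auto
  finally show "2 * real M * real N * (sqrt 2 * exp (- (real M / 2)))
      \<le> 4 * sqrt 2 * C * real M * real M * ln (real M) * exp (- (real M / 2))"
    by (simp add: ac_simps)
next
  let ?A = "4 * real M * sqrt (real M) / sqrt Cp + 5"
  have "0 < ?A"
    using Cp by (simp add: add_nonneg_pos)
  then have A: "?A ^ (2 * M) = exp (2 * real M * ln ?A)"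
    using exp_of_nat_mult[of "2 * M" "ln ?A"] by simp
  have "2 ^ N * (4 * sqrt Cp) ^ (nat \<lfloor>(1 - \<alpha>) * real N\<rfloor> + 1) \<le> exp (- (10 / C) * real N)"
    using Cp C \<alpha> q by (intro two_pow_mult_pow_le_exp) auto
  also have "\<dots> \<le> exp (- (5 * real M * ln (real M)))"
    using mult_left_mono[OF N(1), of "10 / C"] C by (simp add: field_simps)
  finally have "?A ^ (2 * M) * (2 ^ N * (4 * sqrt Cp) ^ (nat \<lfloor>(1 - \<alpha>) * real N\<rfloor> + 1))
      \<le> ?A ^ (2 * M) * exp (- (5 * real M * ln (real M)))"
    using \<open>0 < ?A\<close> by (intro mult_left_mono) auto
  then show "?A ^ (2 * M) * (2 ^ N * (4 * sqrt Cp) ^ (nat \<lfloor>(1 - \<alpha>) * real N\<rfloor> + 1))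
      \<le> exp (2 * real M * ln ?A - 5 * real M * ln (real M))"
    unfolding A by (simp add: exp_add[symmetric])
qed

lemma eventually_failure_terms_le:
  fixes C Cp \<alpha> :: real and n :: "nat \<Rightarrow> nat"
  assumes C: "0 < C" and n: "(\<lambda>M. real (n M)) \<sim>[at_top] (\<lambda>M. C * real M * ln (real M))"
    and Cp: "0 < Cp" and \<alpha>: "\<alpha> < 1" and q: "ln (4 * sqrt Cp) \<le> - (10 / C + 1) / (1 - \<alpha>)"
  shows "\<forall>\<^sub>F M in at_top. 0 < M \<and> 0 < n M \<and>
    2 * real M * real (n M) * (sqrt 2 * exp (- (real M / 2)))
      + (4 * real M * sqrt (real M) / sqrt Cp + 5) ^ (2 * M)
        * (2 ^ n M * (4 * sqrt Cp) ^ (nat \<lfloor>(1 - \<alpha>) * real (n M)\<rfloor> + 1))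
    \<le> exp (- (real M / 4))"
proof -
  let ?g = "\<lambda>M::nat. C * real M * ln (real M)"
  have "filterlim (\<lambda>M::nat. real M * ln (real M)) at_top at_top"
    by real_asymp
  then have "\<forall>\<^sub>F M in at_top. 2 / C \<le> real M * ln (real M)"
    by (simp add: filterlim_at_top)
  then have "\<forall>\<^sub>F M in at_top. 1 \<le> ?g M / 2"
    by eventually_elim (use C in \<open>simp add: field_simps\<close>)
  moreover from this have "\<forall>\<^sub>F M in at_top. ?g M / 2 \<le> real (n M) \<and> real (n M) \<le> 2 * ?g M"
    by (intro asymp_equiv_eventually_between[OF n]) (auto elim: eventually_mono)
  moreover have "\<forall>\<^sub>F M in at_top. 4 * sqrt 2 * C * real M * real M * ln (real M) * exp (- (real M / 2))
      \<le> 1 / 2 * exp (- (real M / 4))"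
    using C by real_asymp
  moreover have "\<forall>\<^sub>F M in at_top.
      exp (2 * real M * ln (4 * real M * sqrt (real M) / sqrt Cp + 5) - 5 * real M * ln (real M))
      \<le> 1 / 2 * exp (- (real M / 4))"
  proof -
    have "\<forall>\<^sub>F M in at_top.
        exp (2 * real M * ln (4 * real M * sqrt (real M) / s + 5) - 5 * real M * ln (real M))
        \<le> 1 / 2 * exp (- (real M / 4))" if "0 < s" for s :: real
      using that by real_asymp
    then show ?thesis
      using Cp by simp
  qed
  ultimately show ?thesis
  proof eventually_elim
    case (elim M)
    have "1 \<le> M"
      using elim(1) by (cases M) auto
    with elim show ?case
      using failure_terms_le[OF _ C Cp \<alpha> q, of M "n M"] Cp by fastforce
  qed
qed

lemma eventually_prob_PU_ge:
  fixes C \<alpha> :: real and n :: "nat \<Rightarrow> nat"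
  assumes C: "0 < C" and n: "(\<lambda>M. real (n M)) \<sim>[at_top] (\<lambda>M. C * real M * ln (real M))"
    and \<alpha>: "0 < \<alpha>" "\<alpha> < 1"
  defines "Cp \<equiv> (exp (- ((10 / C + 1) / (1 - \<alpha>))) / 4)\<^sup>2"
  shows "\<forall>\<^sub>F M in at_top. 1 - exp (- (real M / 4))
    \<le> measure (gauss_matrix M (n M)) {\<Phi> \<in> space (gauss_matrix M (n M)). Cp / real M \<le> PU M (n M) \<Phi> \<alpha>}"
proof -
  have q: "4 * sqrt Cp = exp (- ((10 / C + 1) / (1 - \<alpha>)))"
    by (simp add: Cp_def)
  have "exp (- ((10 / C + 1) / (1 - \<alpha>))) \<le> 1"
    using C \<alpha> by simp
  then have Cp: "0 < Cp" "Cp \<le> 1 / 16"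
    by (auto simp: Cp_def power_divide intro: power_le_one)
  have "ln (4 * sqrt Cp) \<le> - (10 / C + 1) / (1 - \<alpha>)"
    unfolding q ln_exp minus_divide_left by (rule order_refl)
  from eventually_failure_terms_le[OF C n Cp(1) \<alpha>(2) this] show ?thesis
  proof eventually_elim
    case (elim M)
    then interpret gaussian_matrix M "n M"
      by unfold_locales (auto intro: Nat.gr0I)
    show ?case
      using prob_PU_ge_scaled_lower_bound[OF _ \<alpha>(1) _ Cp] elim \<alpha>(2) by fastforce
  qed
qed

theorem lemma6p9:
  fixes C \<alpha> :: real and n :: "nat \<Rightarrow> nat"
  assumes "C > 0"
    and "(\<lambda>M. real (n M)) \<sim>[at_top] (\<lambda>M. C * real M * ln (real M))"
    and "0 < \<alpha>" and "\<alpha> < 1 - 1 / (2 * C)"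
  shows "\<exists>C' > 0. \<exists>c0 > 0. \<exists>c1 > 0. \<forall>M \<ge> 1.
           measure (gauss_matrix M (n M))
             {Phi \<in> space (gauss_matrix M (n M)). C' / real M \<le> PU M (n M) Phi \<alpha>}
           \<ge> 1 - c0 * exp (- c1 * real M)"
proof -
  define C' where "C' = (exp (- ((10 / C + 1) / (1 - \<alpha>))) / 4)\<^sup>2"
  have "0 < 1 / (2 * C)"
    using assms(1) by simp
  then have "\<alpha> < 1"
    using assms(4) by linarith
  then have "\<forall>\<^sub>F M in at_top. 1 - exp (- (1 / 4) * real M)
    \<le> measure (gauss_matrix M (n M)) {\<Phi> \<in> space (gauss_matrix M (n M)). C' / real M \<le> PU M (n M) \<Phi> \<alpha>}"
    using eventually_prob_PU_ge[OF assms(1-3)] unfolding C'_def by simp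
  from overwhelming_of_eventually[OF this measure_nonneg]
  obtain c0 where "c0 > 0" "\<forall>M. 1 - c0 * exp (- (1 / 4) * real M)
    \<le> measure (gauss_matrix M (n M)) {\<Phi> \<in> space (gauss_matrix M (n M)). C' / real M \<le> PU M (n M) \<Phi> \<alpha>}"
    by auto
  moreover have "C' > 0"
    by (simp add: C'_def)
  ultimately show ?thesis
    by (intro exI[of _ C'] conjI exI[of _ c0] exI[of _ "1 / 4 :: real"] allI impI) auto
qed

end
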